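(* Assume the setting described in the context. For any word $W$ over $F$ there exists a sequence of valid swaps transforming $W$ into a $\pi$-stable word.
   Context: Setting: $F$ is a finite set with a symmetric relation $\sim$ (loops allowed), $\Gamma(f)=\{g:f\sim g\}$, $\Gamma^+(f)=\Gamma(f)\cup\{f\}$ and $\Gamma^+(S)=\bigcup_{f\in S}\Gamma^+(f)$. Write $f\cong g$ if $f\sim g$ or $f=g$. $S\subseteq F$ is independent if $f\not\sim g$ for distinct $f,g\in S$; $\mathrm{Ind}(F)$ is the family of independent sets. $\pi$ is a permutation of $F$ inducing a total order $\preceq_\pi$. A word is a finite sequence of elements of $F$. A valid swap on a word replaces two adjacent letters $fg$ by $gf$, provided $f\not\cong g$. A sequence $(I_1,\ldots,I_s)$, $s\ge1$, is stable if $I_r\in\mathrm{Ind}(F)$ and $I_{r+1}\subseteq\Gamma^+(I_r)$ for $r\in[s-1]$. A word $W$ is stable if it can be partitioned as $W=W_1\ldots W_s$ into nonempty words, each consisting of distinct letters, such that $(I_1,\ldots,I_s)$ is stable, where $I_r$ is the set of letters of $W_r$. It is $\pi$-stable if in addition each $W_r$ is strictly $\prec_\pi$-increasing. The empty word is regarded as $\pi$-stable. *)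

theory Defs
  imports Main
begin

text \<open>Setting: ground set F (type 'a carrier), symmetric relation R (the relation ~),
  and pi :: 'a => nat injective on F encoding the total order induced by the permutation.\<close>

definition cong_rel :: "('a \<Rightarrow> 'a \<Rightarrow> bool) \<Rightarrow> 'a \<Rightarrow> 'a \<Rightarrow> bool" where
  "cong_rel R f g \<longleftrightarrow> R f g \<or> f = g"

definition Gamma :: "'a set \<Rightarrow> ('a \<Rightarrow> 'a \<Rightarrow> bool) \<Rightarrow> 'a \<Rightarrow> 'a set" where
  "Gamma F R f = {g \<in> F. R f g}"

definition Gamma_plus :: "'a set \<Rightarrow> ('a \<Rightarrow> 'a \<Rightarrow> bool) \<Rightarrow> 'a \<Rightarrow> 'a set" where
  "Gamma_plus F R f = Gamma F R f \<union> {f}"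

definition Gamma_plus_set :: "'a set \<Rightarrow> ('a \<Rightarrow> 'a \<Rightarrow> bool) \<Rightarrow> 'a set \<Rightarrow> 'a set" where
  "Gamma_plus_set F R S = (\<Union>f\<in>S. Gamma_plus F R f)"

definition independent :: "'a set \<Rightarrow> ('a \<Rightarrow> 'a \<Rightarrow> bool) \<Rightarrow> 'a set \<Rightarrow> bool" where
  "independent F R S \<longleftrightarrow> S \<subseteq> F \<and> (\<forall>f\<in>S. \<forall>g\<in>S. f \<noteq> g \<longrightarrow> \<not> R f g)"

definition Ind :: "'a set \<Rightarrow> ('a \<Rightarrow> 'a \<Rightarrow> bool) \<Rightarrow> 'a set set" where
  "Ind F R = {S. independent F R S}"

definition valid_swap :: "('a \<Rightarrow> 'a \<Rightarrow> bool) \<Rightarrow> 'a list \<Rightarrow> 'a list \<Rightarrow> bool" where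
  "valid_swap R W W' \<longleftrightarrow>
     (\<exists>u f g v. W = u @ [f, g] @ v \<and> W' = u @ [g, f] @ v \<and> \<not> cong_rel R f g)"

definition stable_seq :: "'a set \<Rightarrow> ('a \<Rightarrow> 'a \<Rightarrow> bool) \<Rightarrow> 'a set list \<Rightarrow> bool" where
  "stable_seq F R Is \<longleftrightarrow> Is \<noteq> [] \<and> (\<forall>I\<in>set Is. I \<in> Ind F R) \<and>
     (\<forall>r. Suc r < length Is \<longrightarrow> Is ! Suc r \<subseteq> Gamma_plus_set F R (Is ! r))"

definition stable_word :: "'a set \<Rightarrow> ('a \<Rightarrow> 'a \<Rightarrow> bool) \<Rightarrow> 'a list \<Rightarrow> bool" where
  "stable_word F R W \<longleftrightarrow> (\<exists>Ws. W = concat Ws \<and>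
     (\<forall>w\<in>set Ws. w \<noteq> [] \<and> distinct w) \<and> stable_seq F R (map set Ws))"

definition pi_stable_word :: "'a set \<Rightarrow> ('a \<Rightarrow> 'a \<Rightarrow> bool) \<Rightarrow> ('a \<Rightarrow> nat) \<Rightarrow> 'a list \<Rightarrow> bool" where
  "pi_stable_word F R \<pi> W \<longleftrightarrow> W = [] \<or> (\<exists>Ws. W = concat Ws \<and>
     (\<forall>w\<in>set Ws. w \<noteq> [] \<and> distinct w \<and> sorted_wrt (\<lambda>x y. \<pi> x < \<pi> y) w) \<and>
     stable_seq F R (map set Ws))"

end

theory Submission
  imports Defs
begin

text \<open>Append the letters of the word one at a time, keeping the part already processed
  rearranged into \<pi>-sorted blocks that form a stable sequence.  A new letter f lying in
  \<Gamma>+ of the last block becomes a block of its own.  Otherwise f is related to no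
  letter of the last block, so it can be swapped in front of that block; it joins the block
  (at its \<pi>-position, which keeps the block independent by symmetry of the relation) if f lies
  in \<Gamma>+ of the preceding block or there is none, and is inserted recursively into the
  earlier blocks otherwise.  The recursion only enlarges the last of the earlier blocks, so the
  block that f skipped stays inside its \<Gamma>+.\<close>

lemma valid_swapI: "\<not> cong_rel R f g \<Longrightarrow> valid_swap R (u @ [f, g] @ v) (u @ [g, f] @ v)"
  unfolding valid_swap_def by blast

lemma valid_swaps_in_context:
  "(valid_swap R)\<^sup>*\<^sup>* X Y \<Longrightarrow> (valid_swap R)\<^sup>*\<^sup>* (u @ X @ v) (u @ Y @ v)"
proof (induction rule: rtranclp_induct)
  case (step Y Z)
  have "valid_swap R (u @ Y @ v) (u @ Z @ v)"
    using step.hyps(2) unfolding valid_swap_def by (metis append.assoc)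
  with step.IH show ?case by simp
qed simp

lemma valid_swaps_move_left:
  "\<forall>x\<in>set X. \<not> cong_rel R x f \<Longrightarrow> (valid_swap R)\<^sup>*\<^sup>* (X @ [f]) (f # X)"
proof (induction X)
  case (Cons x X)
  have "(valid_swap R)\<^sup>*\<^sup>* (X @ [f]) (f # X)"
    using Cons by simp
  then have "(valid_swap R)\<^sup>*\<^sup>* ([x] @ (X @ [f]) @ []) ([x] @ (f # X) @ [])"
    by (rule valid_swaps_in_context)
  moreover have "valid_swap R ([] @ [x, f] @ X) ([] @ [f, x] @ X)"
    using Cons.prems by (intro valid_swapI) simp
  ultimately show ?case by (simp add: rtranclp.rtrancl_into_rtrancl)
qed simp

lemma valid_swaps_insort_key:
  "\<forall>x\<in>set w. \<not> cong_rel R x f \<Longrightarrow> (valid_swap R)\<^sup>*\<^sup>* (w @ [f]) (insort_key \<pi> f w)"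
proof (induction w)
  case (Cons x w)
  show ?case
  proof (cases "\<pi> f \<le> \<pi> x")
    case True
    then show ?thesis using valid_swaps_move_left[OF Cons.prems] by simp
  next
    case False
    have "(valid_swap R)\<^sup>*\<^sup>* (w @ [f]) (insort_key \<pi> f w)"
      using Cons by simp
    then have "(valid_swap R)\<^sup>*\<^sup>* ([x] @ (w @ [f]) @ []) ([x] @ insort_key \<pi> f w @ [])"
      by (rule valid_swaps_in_context)
    then show ?thesis using False by simp
  qed
qed simp

lemma sorted_wrt_less_insort_key:
  "sorted_wrt (\<lambda>x y. \<pi> x < \<pi> y) w \<Longrightarrow> \<pi> f \<notin> \<pi> ` set w
    \<Longrightarrow> sorted_wrt (\<lambda>x y. \<pi> x < \<pi> y) (insort_key \<pi> f w)"
  by (induction w) (auto simp: set_insort_key order_le_less)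

lemma distinct_if_sorted_wrt_less:
  fixes \<pi> :: "'a \<Rightarrow> 'b::preorder"
  shows "sorted_wrt (\<lambda>x y. \<pi> x < \<pi> y) w \<Longrightarrow> distinct w"
proof (induction w)
  case (Cons x w)
  then have "x \<notin> set w" by fastforce
  with Cons show ?case by simp
qed simp

lemma mem_Gamma_plus_set_iff:
  "f \<in> F \<Longrightarrow> f \<in> Gamma_plus_set F R S \<longleftrightarrow> (\<exists>g\<in>S. cong_rel R g f)"
  unfolding Gamma_plus_set_def Gamma_plus_def Gamma_def cong_rel_def by blast

lemma Gamma_plus_set_mono: "S \<subseteq> T \<Longrightarrow> Gamma_plus_set F R S \<subseteq> Gamma_plus_set F R T"
  unfolding Gamma_plus_set_def by blast

lemma singleton_Ind: "f \<in> F \<Longrightarrow> {f} \<in> Ind F R"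
  unfolding Ind_def independent_def by simp

lemma insert_Ind:
  assumes "\<forall>f\<in>F. \<forall>g\<in>F. R f g \<longrightarrow> R g f" and "S \<in> Ind F R" and "f \<in> F"
    and "f \<notin> Gamma_plus_set F R S"
  shows "insert f S \<in> Ind F R"
  using assms unfolding Ind_def independent_def Gamma_plus_set_def Gamma_plus_def Gamma_def
  by blast

lemma stable_seq_iff_successively:
  "stable_seq F R Is \<longleftrightarrow>
     Is \<noteq> [] \<and> (\<forall>I\<in>set Is. I \<in> Ind F R) \<and>
     successively (\<lambda>I J. J \<subseteq> Gamma_plus_set F R I) Is"
  by (simp add: stable_seq_def successively_conv_nth)

definition pi_stable_blocks ::
    "'a set \<Rightarrow> ('a \<Rightarrow> 'a \<Rightarrow> bool) \<Rightarrow> ('a \<Rightarrow> nat) \<Rightarrow> 'a list list \<Rightarrow> bool" where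
  "pi_stable_blocks F R \<pi> Ws \<longleftrightarrow>
     (\<forall>w\<in>set Ws. w \<noteq> [] \<and> sorted_wrt (\<lambda>x y. \<pi> x < \<pi> y) w \<and> set w \<in> Ind F R) \<and>
     successively (\<lambda>v w. set w \<subseteq> Gamma_plus_set F R (set v)) Ws"

lemma pi_stable_blocks_iff_stable_seq:
  "Ws \<noteq> [] \<Longrightarrow> pi_stable_blocks F R \<pi> Ws \<longleftrightarrow>
     (\<forall>w\<in>set Ws. w \<noteq> [] \<and> distinct w \<and> sorted_wrt (\<lambda>x y. \<pi> x < \<pi> y) w) \<and>
     stable_seq F R (map set Ws)"
  unfolding pi_stable_blocks_def stable_seq_iff_successively successively_map
  using distinct_if_sorted_wrt_less by fastforce

lemma pi_stable_word_iff_blocks: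
  "pi_stable_word F R \<pi> W \<longleftrightarrow> (\<exists>Ws. W = concat Ws \<and> pi_stable_blocks F R \<pi> Ws)"
proof (cases "W = []")
  case True
  then show ?thesis
    by (auto simp: pi_stable_word_def pi_stable_blocks_def intro: exI[of _ "[]"])
next
  case False
  show ?thesis
  proof
    assume "pi_stable_word F R \<pi> W"
    then obtain Ws where "W = concat Ws" "stable_seq F R (map set Ws)"
        "\<forall>w\<in>set Ws. w \<noteq> [] \<and> distinct w \<and> sorted_wrt (\<lambda>x y. \<pi> x < \<pi> y) w"
      using False unfolding pi_stable_word_def by blast
    moreover from this(2) have "Ws \<noteq> []"
      unfolding stable_seq_def by auto
    ultimately show "\<exists>Ws. W = concat Ws \<and> pi_stable_blocks F R \<pi> Ws"
      using pi_stable_blocks_iff_stable_seq by blast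
  next
    assume "\<exists>Ws. W = concat Ws \<and> pi_stable_blocks F R \<pi> Ws"
    then obtain Ws where "W = concat Ws" "pi_stable_blocks F R \<pi> Ws"
      by blast
    moreover from this(1) False have "Ws \<noteq> []"
      by auto
    ultimately show "pi_stable_word F R \<pi> W"
      unfolding pi_stable_word_def using pi_stable_blocks_iff_stable_seq by blast
  qed
qed

lemma pi_stable_blocks_snoc:
  "pi_stable_blocks F R \<pi> (Ws @ [w]) \<longleftrightarrow>
     pi_stable_blocks F R \<pi> Ws \<and> w \<noteq> [] \<and> sorted_wrt (\<lambda>x y. \<pi> x < \<pi> y) w \<and>
     set w \<in> Ind F R \<and> (Ws \<noteq> [] \<longrightarrow> set w \<subseteq> Gamma_plus_set F R (set (last Ws)))"
  by (auto simp: pi_stable_blocks_def successively_append_iff)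

lemma pi_stable_blocks_snoc_insort_key:
  assumes sym: "\<forall>f\<in>F. \<forall>g\<in>F. R f g \<longrightarrow> R g f" and inj: "inj_on \<pi> F" and f: "f \<in> F"
    and blocks: "pi_stable_blocks F R \<pi> (Ws @ [w])"
    and not_adjacent: "f \<notin> Gamma_plus_set F R (set w)"
    and adjacent_before: "Ws = [] \<or> f \<in> Gamma_plus_set F R (set (last Ws))"
  shows "pi_stable_blocks F R \<pi> (Ws @ [insort_key \<pi> f w])"
proof -
  note block_w = blocks[unfolded pi_stable_blocks_snoc]
  then have "set w \<subseteq> F"
    unfolding Ind_def independent_def by blast
  moreover have "f \<notin> set w"
    using not_adjacent f mem_Gamma_plus_set_iff cong_rel_def by metis
  ultimately have "\<pi> f \<notin> \<pi> ` set w"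
    using inj f by (auto simp: inj_on_eq_iff subset_iff)
  then show ?thesis
    using block_w adjacent_before insert_Ind[OF sym _ f not_adjacent]
    by (auto simp: pi_stable_blocks_snoc set_insort_key sorted_wrt_less_insort_key)
qed

lemma pi_stable_blocks_insert_letter:
  assumes sym: "\<forall>f\<in>F. \<forall>g\<in>F. R f g \<longrightarrow> R g f" and inj: "inj_on \<pi> F" and f: "f \<in> F"
    and "pi_stable_blocks F R \<pi> Ws"
  shows "\<exists>Ws'. pi_stable_blocks F R \<pi> Ws' \<and> Ws' \<noteq> [] \<and>
    (valid_swap R)\<^sup>*\<^sup>* (concat Ws @ [f]) (concat Ws') \<and>
    (Ws \<noteq> [] \<longrightarrow> f \<notin> Gamma_plus_set F R (set (last Ws)) \<longrightarrow> set (last Ws) \<subseteq> set (last Ws'))"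
  using assms(4)
proof (induction Ws rule: rev_induct)
  case Nil
  then show ?case
    using singleton_Ind[OF f] by (intro exI[of _ "[[f]]"]) (simp add: pi_stable_blocks_def)
next
  case (snoc w Ws)
  note block_w = snoc.prems[unfolded pi_stable_blocks_snoc]
  show ?case
  proof (cases "f \<in> Gamma_plus_set F R (set w)")
    case True
    then have "pi_stable_blocks F R \<pi> ((Ws @ [w]) @ [[f]])"
      using snoc.prems singleton_Ind[OF f] by (subst pi_stable_blocks_snoc) simp
    then show ?thesis
      using True by (intro exI[of _ "Ws @ [w] @ [[f]]"]) auto
  next
    case False
    then have commute: "\<forall>x\<in>set w. \<not> cong_rel R x f"
      using mem_Gamma_plus_set_iff[OF f] by blast
    show ?thesis
    proof (cases "Ws = [] \<or> f \<in> Gamma_plus_set F R (set (last Ws))")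
      case True
      let ?w' = "insort_key \<pi> f w"
      have "pi_stable_blocks F R \<pi> (Ws @ [?w'])"
        by (rule pi_stable_blocks_snoc_insort_key[OF sym inj f snoc.prems False True])
      moreover have "(valid_swap R)\<^sup>*\<^sup>* (concat Ws @ (w @ [f]) @ []) (concat Ws @ ?w' @ [])"
        using valid_swaps_insort_key[OF commute] by (rule valid_swaps_in_context)
      ultimately show ?thesis
        by (intro exI[of _ "Ws @ [?w']"]) (auto simp: set_insort_key)
    next
      case False
      then obtain Ws' where Ws': "pi_stable_blocks F R \<pi> Ws'" "Ws' \<noteq> []"
          "(valid_swap R)\<^sup>*\<^sup>* (concat Ws @ [f]) (concat Ws')"
          "set (last Ws) \<subseteq> set (last Ws')"
        using snoc.IH block_w by blast
      have "set w \<subseteq> Gamma_plus_set F R (set (last Ws'))"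
        using block_w False Gamma_plus_set_mono[OF Ws'(4)] by blast
      then have "pi_stable_blocks F R \<pi> (Ws' @ [w])"
        using block_w Ws'(1) by (simp add: pi_stable_blocks_snoc)
      moreover have "(valid_swap R)\<^sup>*\<^sup>* (concat Ws @ (w @ [f]) @ []) (concat Ws @ (f # w) @ [])"
        using valid_swaps_move_left[OF commute] by (rule valid_swaps_in_context)
      moreover have "(valid_swap R)\<^sup>*\<^sup>* ([] @ (concat Ws @ [f]) @ w) ([] @ concat Ws' @ w)"
        using Ws'(3) by (rule valid_swaps_in_context)
      ultimately show ?thesis
        by (intro exI[of _ "Ws' @ [w]"]) auto
    qed
  qed
qed

lemma valid_swaps_to_pi_stable_blocks:
  assumes "\<forall>f\<in>F. \<forall>g\<in>F. R f g \<longrightarrow> R g f" and "inj_on \<pi> F" and "set W \<subseteq> F"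
  shows "\<exists>Ws. (valid_swap R)\<^sup>*\<^sup>* W (concat Ws) \<and> pi_stable_blocks F R \<pi> Ws"
  using assms(3)
proof (induction W rule: rev_induct)
  case Nil
  then show ?case by (intro exI[of _ "[]"]) (simp add: pi_stable_blocks_def)
next
  case (snoc f W)
  then obtain Ws where Ws: "(valid_swap R)\<^sup>*\<^sup>* W (concat Ws)" "pi_stable_blocks F R \<pi> Ws"
    by auto
  obtain Ws' where Ws': "pi_stable_blocks F R \<pi> Ws'"
      "(valid_swap R)\<^sup>*\<^sup>* (concat Ws @ [f]) (concat Ws')"
    using pi_stable_blocks_insert_letter[OF assms(1,2) _ Ws(2), of f] snoc.prems by auto
  have "(valid_swap R)\<^sup>*\<^sup>* ([] @ W @ [f]) ([] @ concat Ws @ [f])"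
    using Ws(1) by (rule valid_swaps_in_context)
  with Ws' show ?case
    by (intro exI[of _ Ws']) (simp add: rtranclp_trans)
qed

theorem lemma4:
  fixes F :: "'a set" and R :: "'a \<Rightarrow> 'a \<Rightarrow> bool" and \<pi> :: "'a \<Rightarrow> nat"
    and W :: "'a list"
  assumes "finite F"
    and "\<forall>f\<in>F. \<forall>g\<in>F. R f g \<longrightarrow> R g f"
    and "inj_on \<pi> F"
    and "set W \<subseteq> F"
  shows "\<exists>W'. (valid_swap R)\<^sup>*\<^sup>* W W' \<and> pi_stable_word F R \<pi> W'"
  using valid_swaps_to_pi_stable_blocks[OF assms(2-4)] pi_stable_word_iff_blocks by blast

end
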